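(* Let $\mathcal V\subseteq B(H)$ be an operator system, let $p\in\mathcal V$ be a projection in $B(H)$, and let $q=I-p$. If $a,b,c\in\mathcal V$ with $a=a^*$ and $b=b^*$, then $pap+pcq+qc^*p+qbq\ge0$ in $B(H)$ if and only if $\begin{pmatrix}a&c\\c^*&b\end{pmatrix}\in C(p\oplus q)$.
   Context: $C(p\oplus q)=\{y\in M_2(\mathcal V): y=y^*,\ (p\oplus q)\,y\,(p\oplus q)\ge0 \text{ in } B(H^2)\}$ where $p\oplus q=\mathrm{diag}(p,q)$. *)

theory Defs
  imports Complex_Main
begin

class chilbert = ab_group_add +
  fixes scaleC :: "complex \<Rightarrow> 'a \<Rightarrow> 'a" (infixr "*\<^sub>C" 75)
    and cinner :: "'a \<Rightarrow> 'a \<Rightarrow> complex"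
  assumes scaleC_add_right: "a *\<^sub>C (x + y) = a *\<^sub>C x + a *\<^sub>C y"
    and scaleC_add_left: "(a + b) *\<^sub>C x = a *\<^sub>C x + b *\<^sub>C x"
    and scaleC_scaleC: "a *\<^sub>C (b *\<^sub>C x) = (a * b) *\<^sub>C x"
    and scaleC_one: "1 *\<^sub>C x = x"
    and cinner_sym: "cinner x y = cnj (cinner y x)"
    and cinner_add_left: "cinner (x + y) z = cinner x z + cinner y z"
    and cinner_scaleC_left: "cinner (a *\<^sub>C x) y = a * cinner x y"
    and cinner_self_nonneg: "Im (cinner x x) = 0 \<and> 0 \<le> Re (cinner x x)"
    and cinner_self_eq_zero: "cinner x x = 0 \<Longrightarrow> x = 0"
    and cinner_complete:
      "(\<forall>e>0. \<exists>N. \<forall>m\<ge>(N::nat). \<forall>n\<ge>N. sqrt (Re (cinner (X m - X n) (X m - X n))) < e)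
        \<Longrightarrow> (\<exists>L. \<forall>e>0. \<exists>N::nat. \<forall>n\<ge>N. sqrt (Re (cinner (X n - L) (X n - L))) < e)"

definition cnorm :: "'h::chilbert \<Rightarrow> real" where
  "cnorm x = sqrt (Re (cinner x x))"

definition clinear :: "('h::chilbert \<Rightarrow> 'h) \<Rightarrow> bool" where
  "clinear T \<longleftrightarrow> (\<forall>x y. T (x + y) = T x + T y) \<and> (\<forall>a x. T (a *\<^sub>C x) = a *\<^sub>C T x)"

definition Bop :: "('h::chilbert \<Rightarrow> 'h) set" where
  "Bop = {T. clinear T \<and> (\<exists>K. \<forall>x. cnorm (T x) \<le> K * cnorm x)}"

definition is_adjoint :: "('h::chilbert \<Rightarrow> 'h) \<Rightarrow> ('h \<Rightarrow> 'h) \<Rightarrow> bool" where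
  "is_adjoint T S \<longleftrightarrow> (\<forall>x y. cinner (T x) y = cinner x (S y))"

definition adj :: "('h::chilbert \<Rightarrow> 'h) \<Rightarrow> ('h \<Rightarrow> 'h)" where
  "adj T = (THE S. is_adjoint T S)"

definition selfadj :: "('h::chilbert \<Rightarrow> 'h) \<Rightarrow> bool" where
  "selfadj T \<longleftrightarrow> is_adjoint T T"

definition pos_op :: "('h::chilbert \<Rightarrow> 'h) \<Rightarrow> bool" where
  "pos_op T \<longleftrightarrow> T \<in> Bop \<and> (\<forall>x. Im (cinner (T x) x) = 0 \<and> 0 \<le> Re (cinner (T x) x))"

definition projection :: "('h::chilbert \<Rightarrow> 'h) \<Rightarrow> bool" where
  "projection p \<longleftrightarrow> p \<in> Bop \<and> (\<forall>x. p (p x) = p x) \<and> selfadj p"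

definition operator_system :: "('h::chilbert \<Rightarrow> 'h) set \<Rightarrow> bool" where
  "operator_system V \<longleftrightarrow> V \<subseteq> Bop \<and> (\<lambda>x. 0) \<in> V \<and> id \<in> V
     \<and> (\<forall>S\<in>V. \<forall>T\<in>V. (\<lambda>x. S x + T x) \<in> V)
     \<and> (\<forall>a. \<forall>T\<in>V. (\<lambda>x. a *\<^sub>C T x) \<in> V)
     \<and> (\<forall>T\<in>V. \<exists>S\<in>V. is_adjoint T S)"

definition cinner2 :: "'h::chilbert \<times> 'h \<Rightarrow> 'h \<times> 'h \<Rightarrow> complex" where
  "cinner2 u v = cinner (fst u) (fst v) + cinner (snd u) (snd v)"

definition mat2 :: "('h::chilbert \<Rightarrow> 'h) \<Rightarrow> ('h \<Rightarrow> 'h) \<Rightarrow> ('h \<Rightarrow> 'h) \<Rightarrow> ('h \<Rightarrow> 'h)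
    \<Rightarrow> ('h \<times> 'h \<Rightarrow> 'h \<times> 'h)" where
  "mat2 y11 y12 y21 y22 = (\<lambda>(x, y). (y11 x + y12 y, y21 x + y22 y))"

definition M2 :: "('h::chilbert \<Rightarrow> 'h) set \<Rightarrow> ('h \<times> 'h \<Rightarrow> 'h \<times> 'h) set" where
  "M2 V = {mat2 y11 y12 y21 y22 | y11 y12 y21 y22. y11 \<in> V \<and> y12 \<in> V \<and> y21 \<in> V \<and> y22 \<in> V}"

definition selfadj2 :: "('h::chilbert \<times> 'h \<Rightarrow> 'h \<times> 'h) \<Rightarrow> bool" where
  "selfadj2 Y \<longleftrightarrow> (\<forall>u v. cinner2 (Y u) v = cinner2 u (Y v))"

definition pos_op2 :: "('h::chilbert \<times> 'h \<Rightarrow> 'h \<times> 'h) \<Rightarrow> bool" where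
  "pos_op2 Z \<longleftrightarrow> (\<forall>u. Im (cinner2 (Z u) u) = 0 \<and> 0 \<le> Re (cinner2 (Z u) u))"

definition diag2 :: "('h::chilbert \<Rightarrow> 'h) \<Rightarrow> ('h \<Rightarrow> 'h) \<Rightarrow> ('h \<times> 'h \<Rightarrow> 'h \<times> 'h)" where
  "diag2 p q = (\<lambda>(x, y). (p x, q y))"

definition Ccone :: "('h::chilbert \<Rightarrow> 'h) set \<Rightarrow> ('h \<Rightarrow> 'h) \<Rightarrow> ('h \<Rightarrow> 'h)
    \<Rightarrow> ('h \<times> 'h \<Rightarrow> 'h \<times> 'h) set" where
  "Ccone V p q = {Y. Y \<in> M2 V \<and> selfadj2 Y \<and> pos_op2 (diag2 p q \<circ> Y \<circ> diag2 p q)}"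

end

theory Submission imports Defs begin

text \<open>For \<open>u = (x, y)\<close> the quadratic form of \<open>(p \<oplus> q) Y (p \<oplus> q)\<close>, with \<open>Y\<close> the
  block matrix, equals the quadratic form of \<open>T = pap + pcq + qc\<^sup>*p + qbq\<close> at \<open>p x + q y\<close>, because
  \<open>p\<close> and \<open>q\<close> are complementary orthogonal projections. As \<open>z = p z + q z\<close>, every vector of
  \<open>H\<close> arises this way, so the two positivity conditions coincide. The remaining conditions
  defining \<open>C(p \<oplus> q)\<close> hold automatically: the entries lie in \<open>V\<close> because \<open>V\<close> is closed
  under adjoints, and the block matrix is self-adjoint because \<open>a\<close> and \<open>b\<close> are.
  Positivity in \<open>B(H)\<close> also includes boundedness of \<open>T\<close>, which rests on the triangle
  inequality, i.e. on Cauchy-Schwarz.\<close>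

lemma cinner_zero_left [simp]: "cinner (0::'h::chilbert) y = 0"
  using cinner_add_left[of "0::'h" 0 y] by simp

lemma cinner_minus_left: "cinner (- x::'h::chilbert) y = - cinner x y"
  using cinner_add_left[of x "- x" y] by (simp add: add_eq_0_iff2)

lemma cinner_diff_left: "cinner (x - z::'h::chilbert) y = cinner x y - cinner z y"
  using cinner_add_left[of x "- z" y] by (simp add: cinner_minus_left)

lemma cinner_add_right: "cinner (x::'h::chilbert) (y + z) = cinner x y + cinner x z"
  by (metis cinner_sym cinner_add_left complex_cnj_add)

lemma cinner_zero_right [simp]: "cinner (x::'h::chilbert) 0 = 0"
  by (metis cinner_sym cinner_zero_left complex_cnj_zero)

lemma cinner_diff_right: "cinner (x::'h::chilbert) (y - z) = cinner x y - cinner x z"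
  by (metis cinner_sym cinner_diff_left complex_cnj_diff)

lemma cinner_minus_right: "cinner (x::'h::chilbert) (- y) = - cinner x y"
  by (metis cinner_sym cinner_minus_left complex_cnj_minus)

lemma cinner_scaleC_right: "cinner (x::'h::chilbert) (a *\<^sub>C y) = cnj a * cinner x y"
  by (metis cinner_sym cinner_scaleC_left complex_cnj_mult)

lemma scaleC_diff_right: "a *\<^sub>C (x - y) = a *\<^sub>C x - a *\<^sub>C (y::'h::chilbert)"
  using scaleC_add_right[of a "x - y" y] by (simp add: eq_diff_eq)

lemma cinner_self_of_real: "cinner (x::'h::chilbert) x = complex_of_real (Re (cinner x x))"
  using cinner_self_nonneg[of x] by (simp add: complex_eq_iff)

lemma cinner_Cauchy_Schwarz:
  "cmod (cinner (x::'h::chilbert) y) ^ 2 \<le> Re (cinner x x) * Re (cinner y y)"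
proof (cases "y = 0")
  case True
  then show ?thesis by simp
next
  case False
  define r where "r = Re (cinner y y)"
  define w where "w = cinner x y"
  define t where "t = w / complex_of_real r"
  have yy: "cinner y y = complex_of_real r"
    using cinner_self_of_real r_def by simp
  then have "r \<noteq> 0"
    using False cinner_self_eq_zero[of y] by auto
  then have "r > 0"
    using cinner_self_nonneg[of y] r_def by simp
  have yx: "cinner y x = cnj w"
    using cinner_sym w_def by metis
  \<comment> \<open>expand \<open>0 \<le> \<langle>x - t y, x - t y\<rangle>\<close> with the minimizing \<open>t = \<langle>x, y\<rangle> / \<langle>y, y\<rangle>\<close>\<close>
  have "cinner (x - t *\<^sub>C y) (x - t *\<^sub>C y)
      = cinner x x - cnj t * w - t * (cnj w - cnj t * complex_of_real r)"
    by (simp add: cinner_diff_left cinner_diff_right cinner_scaleC_right cinner_scaleC_left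
        yx yy w_def algebra_simps)
  also have "\<dots> = cinner x x - complex_of_real (cmod w ^ 2 / r)"
    using \<open>r > 0\<close> by (simp add: t_def field_simps complex_norm_square[symmetric])
  finally have "cmod w ^ 2 / r \<le> Re (cinner x x)"
    using cinner_self_nonneg[of "x - t *\<^sub>C y"] by simp
  then show ?thesis
    using \<open>r > 0\<close> by (simp add: w_def r_def divide_le_eq)
qed

lemma cnorm_nonneg: "0 \<le> cnorm (x::'h::chilbert)"
  using cinner_self_nonneg[of x] by (simp add: cnorm_def)

lemma cnorm_triangle: "cnorm (x + y) \<le> cnorm x + cnorm (y::'h::chilbert)"
proof -
  define X where "X = Re (cinner x x)"
  define Y where "Y = Re (cinner y y)"
  have "X \<ge> 0" "Y \<ge> 0"
    using cinner_self_nonneg X_def Y_def by auto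
  have "Re (cinner x y) \<le> cmod (cinner x y)"
    by (rule complex_Re_le_cmod)
  also have "\<dots> \<le> sqrt (X * Y)"
    using cinner_Cauchy_Schwarz[of x y] X_def Y_def real_le_rsqrt by blast
  finally have "Re (cinner x y) \<le> sqrt X * sqrt Y"
    by (simp add: real_sqrt_mult)
  moreover have "Re (cinner y x) = Re (cinner x y)"
    by (metis cinner_sym cnj.simps(1))
  ultimately have "Re (cinner (x + y) (x + y)) \<le> (sqrt X + sqrt Y) ^ 2"
    using \<open>X \<ge> 0\<close> \<open>Y \<ge> 0\<close>
    by (simp add: cinner_add_left cinner_add_right X_def Y_def power2_eq_square algebra_simps)
  then show ?thesis
    using \<open>X \<ge> 0\<close> \<open>Y \<ge> 0\<close> real_le_lsqrt unfolding cnorm_def X_def Y_def by simp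
qed

lemma cnorm_minus: "cnorm (- x) = cnorm (x::'h::chilbert)"
  by (simp add: cnorm_def cinner_minus_left cinner_minus_right)

lemma cnorm_diff_le: "cnorm (x - y) \<le> cnorm x + cnorm (y::'h::chilbert)"
  using cnorm_triangle[of x "- y"] by (simp add: cnorm_minus)

lemma clinear_diff: "clinear f \<Longrightarrow> f (x - y) = f x - f (y::'h::chilbert)"
  unfolding clinear_def by (metis add_diff_cancel diff_add_cancel)

lemma Bop_clinear: "T \<in> Bop \<Longrightarrow> clinear T"
  unfolding Bop_def by blast

lemma Bop_bound_nonneg:
  assumes "(T::'h::chilbert \<Rightarrow> 'h) \<in> Bop"
  obtains K where "K \<ge> 0" "\<And>x. cnorm (T x) \<le> K * cnorm x"
proof -
  obtain K where K: "\<And>x. cnorm (T x) \<le> K * cnorm x"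
    using assms by (auto simp: Bop_def)
  have "cnorm (T x) \<le> max K 0 * cnorm x" for x
    using K[of x] mult_right_mono[of K "max K 0" "cnorm x"] cnorm_nonneg[of x] by simp
  then show thesis
    using that[of "max K 0"] by simp
qed

lemma Bop_id: "(\<lambda>x::'h::chilbert. x) \<in> Bop"
  unfolding Bop_def clinear_def by (auto intro: exI[of _ 1])

lemma Bop_comp:
  assumes "f \<in> Bop" and "g \<in> Bop"
  shows "(\<lambda>x::'h::chilbert. f (g x)) \<in> Bop"
proof -
  obtain K where "K \<ge> 0" and K: "\<And>x. cnorm (f x) \<le> K * cnorm x"
    using Bop_bound_nonneg[OF assms(1)] by blast
  obtain L where L: "\<And>x. cnorm (g x) \<le> L * cnorm x"
    using assms(2) by (auto simp: Bop_def)
  have "cnorm (f (g x)) \<le> (K * L) * cnorm x" for x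
    using order_trans[OF K mult_left_mono[OF L \<open>K \<ge> 0\<close>]] by (simp add: mult.assoc)
  moreover have "clinear (\<lambda>x. f (g x))"
    using assms by (simp add: Bop_def clinear_def)
  ultimately show ?thesis
    unfolding Bop_def by blast
qed

lemma Bop_add:
  assumes "f \<in> Bop" and "g \<in> Bop"
  shows "(\<lambda>x::'h::chilbert. f x + g x) \<in> Bop"
proof -
  obtain K L where K: "\<And>x. cnorm (f x) \<le> K * cnorm x" and L: "\<And>x. cnorm (g x) \<le> L * cnorm x"
    using assms by (auto simp: Bop_def)
  have "cnorm (f x + g x) \<le> (K + L) * cnorm x" for x
    using cnorm_triangle[of "f x" "g x"] K[of x] L[of x] by (simp add: distrib_right)
  moreover have "clinear (\<lambda>x. f x + g x)"
    using assms by (simp add: Bop_def clinear_def scaleC_add_right algebra_simps)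
  ultimately show ?thesis
    unfolding Bop_def by blast
qed

lemma Bop_diff:
  assumes "f \<in> Bop" and "g \<in> Bop"
  shows "(\<lambda>x::'h::chilbert. f x - g x) \<in> Bop"
proof -
  obtain K L where K: "\<And>x. cnorm (f x) \<le> K * cnorm x" and L: "\<And>x. cnorm (g x) \<le> L * cnorm x"
    using assms by (auto simp: Bop_def)
  have "cnorm (f x - g x) \<le> (K + L) * cnorm x" for x
    using cnorm_diff_le[of "f x" "g x"] K[of x] L[of x] by (simp add: distrib_right)
  moreover have "clinear (\<lambda>x. f x - g x)"
    using assms by (simp add: Bop_def clinear_def scaleC_diff_right algebra_simps)
  ultimately show ?thesis
    unfolding Bop_def by blast
qed

lemma adj_eqI: "is_adjoint (T::'h::chilbert \<Rightarrow> 'h) S \<Longrightarrow> adj T = S"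
proof (unfold adj_def, rule the_equality)
  fix S'
  assume "is_adjoint T S" "is_adjoint T S'"
  then have "cinner x (S' y - S y) = 0" for x y
    by (simp add: is_adjoint_def cinner_diff_right)
  then show "S' = S"
    using cinner_self_eq_zero by fastforce
qed

lemma projection_idem: "projection p \<Longrightarrow> p (p x) = p x"
  by (simp add: projection_def)

lemma projection_selfadj: "projection p \<Longrightarrow> cinner (p x) y = cinner x (p y)"
  by (simp add: projection_def selfadj_def is_adjoint_def)

lemma projection_annihilates_complement:
  "projection p \<Longrightarrow> p (x - p x) = 0"
  by (simp add: projection_def Bop_clinear clinear_diff)

lemma projection_complement:
  assumes "projection p"
  shows "projection (\<lambda>x::'h::chilbert. x - p x)"
proof -
  have "(\<lambda>x. x - p x) \<in> Bop"
    using assms by (simp add: projection_def Bop_diff Bop_id)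
  moreover have "p (x - p x) = 0" for x
    using assms by (rule projection_annihilates_complement)
  ultimately show ?thesis
    using projection_selfadj[OF assms] unfolding projection_def selfadj_def is_adjoint_def
    by (simp add: cinner_diff_left cinner_diff_right)
qed

lemma projection_orthogonal: "projection p \<Longrightarrow> cinner (p x) (y - p y) = 0"
  by (simp add: projection_selfadj projection_annihilates_complement)

lemma projection_inner_range: "projection p \<Longrightarrow> cinner (p x) y = cinner (p x) (p y)"
  by (metis projection_idem projection_selfadj)

definition block_op :: "('h::chilbert \<Rightarrow> 'h) \<Rightarrow> ('h \<Rightarrow> 'h) \<Rightarrow> ('h \<Rightarrow> 'h) \<Rightarrow> ('h \<Rightarrow> 'h)
    \<Rightarrow> ('h \<Rightarrow> 'h) \<Rightarrow> ('h \<Rightarrow> 'h) \<Rightarrow> 'h \<Rightarrow> 'h" where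
  "block_op p q y11 y12 y21 y22 =
     (\<lambda>x. p (y11 (p x)) + p (y12 (q x)) + q (y21 (p x)) + q (y22 (q x)))"

lemma block_op_Bop:
  assumes "p \<in> Bop" "q \<in> Bop" "y11 \<in> Bop" "y12 \<in> Bop" "y21 \<in> Bop" "y22 \<in> Bop"
  shows "block_op p q y11 y12 y21 y22 \<in> Bop"
  unfolding block_op_def
  by (intro Bop_add Bop_comp[OF assms(1) Bop_comp[OF assms(3,1)]] Bop_comp[OF assms(1) Bop_comp[OF assms(4,2)]]
      Bop_comp[OF assms(2) Bop_comp[OF assms(5,1)]] Bop_comp[OF assms(2) Bop_comp[OF assms(6,2)]])

lemma cinner2_compression_mat2:
  fixes p :: "'h::chilbert \<Rightarrow> 'h"
  assumes "projection p" and q: "q = (\<lambda>x. x - p x)"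
  shows "cinner2 ((diag2 p q \<circ> mat2 y11 y12 y21 y22 \<circ> diag2 p q) (x, y)) (x, y)
       = cinner (block_op p q y11 y12 y21 y22 (p x + q y)) (p x + q y)"
proof -
  have "projection q"
    unfolding q using assms(1) by (rule projection_complement)
  have lin: "clinear p" "clinear q"
    using assms(1) \<open>projection q\<close> by (simp_all add: projection_def Bop_clinear)
  have compose: "p (p x) = p x" "p (q y) = 0" "q (p x) = 0" "q (q y) = q y"
    using projection_idem[OF assms(1)] projection_idem[OF \<open>projection q\<close>]
      projection_annihilates_complement[OF assms(1)] by (simp_all add: q)
  have "cinner (p u) x = cinner (p u) (p x + q y)" for u
    using projection_inner_range[OF assms(1)] projection_orthogonal[OF assms(1)]
    by (simp add: q cinner_add_right)
  moreover have "cinner (q u) y = cinner (q u) (p x + q y)" for u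
  proof -
    have "cinner (q u) (p x) = cinner u (q (p x))"
      by (rule projection_selfadj[OF \<open>projection q\<close>])
    also have "\<dots> = 0"
      using projection_idem[OF assms(1)] by (simp add: q)
    finally show ?thesis
      using projection_inner_range[OF \<open>projection q\<close>] by (simp add: cinner_add_right)
  qed
  ultimately show ?thesis
    using lin by (simp add: block_op_def diag2_def mat2_def cinner2_def compose
        clinear_def cinner_add_left add.assoc)
qed

lemma pos_op2_compression_iff:
  fixes p :: "'h::chilbert \<Rightarrow> 'h"
  assumes "projection p" and q: "q = (\<lambda>x. x - p x)"
  shows "pos_op2 (diag2 p q \<circ> mat2 y11 y12 y21 y22 \<circ> diag2 p q)
     \<longleftrightarrow> (\<forall>z. Im (cinner (block_op p q y11 y12 y21 y22 z) z) = 0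
             \<and> 0 \<le> Re (cinner (block_op p q y11 y12 y21 y22 z) z))"
proof -
  have "p z + q z = z" for z
    by (simp add: q)
  then have "(\<forall>x y. P (p x + q y)) \<longleftrightarrow> (\<forall>z. P z)" for P
    by (metis (no_types))
  from this[of "\<lambda>z. Im (cinner (block_op p q y11 y12 y21 y22 z) z) = 0
      \<and> 0 \<le> Re (cinner (block_op p q y11 y12 y21 y22 z) z)"]
  show ?thesis
    unfolding pos_op2_def split_paired_All cinner2_compression_mat2[OF assms] .
qed

lemma selfadj2_mat2:
  assumes "selfadj a" "selfadj b" "is_adjoint c S"
  shows "selfadj2 (mat2 a c S (b::'h::chilbert \<Rightarrow> 'h))"
proof -
  have S: "cinner (S x) y = cinner x (c y)" for x y
    using assms(3) by (metis cinner_sym is_adjoint_def)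
  show ?thesis
    using assms unfolding selfadj2_def selfadj_def is_adjoint_def
    by (simp add: mat2_def cinner2_def cinner_add_left cinner_add_right S)
qed

theorem lemma5p1:
  fixes V :: "('h::chilbert \<Rightarrow> 'h) set" and p q a b c :: "'h \<Rightarrow> 'h"
  assumes "operator_system V"
    and "p \<in> V" and "projection p"
    and "q = (\<lambda>x. x - p x)"
    and "a \<in> V" and "b \<in> V" and "c \<in> V"
    and "selfadj a" and "selfadj b"
  shows "pos_op (\<lambda>x. p (a (p x)) + p (c (q x)) + q (adj c (p x)) + q (b (q x)))
     \<longleftrightarrow> mat2 a c (adj c) b \<in> Ccone V p q"
proof -
  have "V \<subseteq> Bop" and "\<forall>T\<in>V. \<exists>S\<in>V. is_adjoint T S"
    using assms(1) by (simp_all add: operator_system_def)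
  then obtain S where "S \<in> V" and "is_adjoint c S"
    using assms(7) by blast
  then have "adj c = S"
    by (simp add: adj_eqI)
  have "projection q"
    using assms(3,4) by (simp add: projection_complement)
  then have "p \<in> Bop" "q \<in> Bop"
    using assms(3) by (simp_all add: projection_def)
  moreover have "a \<in> Bop" "b \<in> Bop" "c \<in> Bop" "S \<in> Bop"
    using \<open>V \<subseteq> Bop\<close> assms(5,6,7) \<open>S \<in> V\<close> by auto
  ultimately have "block_op p q a c S b \<in> Bop"
    by (simp add: block_op_Bop)
  then have "pos_op (block_op p q a c S b)
      \<longleftrightarrow> pos_op2 (diag2 p q \<circ> mat2 a c S b \<circ> diag2 p q)"
    unfolding pos_op_def pos_op2_compression_iff[OF assms(3,4)] by blast
  moreover have "mat2 a c S b \<in> M2 V"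
    using assms(5,6,7) \<open>S \<in> V\<close> unfolding M2_def by blast
  moreover have "selfadj2 (mat2 a c S b)"
    using assms(8,9) \<open>is_adjoint c S\<close> by (rule selfadj2_mat2)
  ultimately show ?thesis
    unfolding Ccone_def block_op_def \<open>adj c = S\<close> by blast
qed

end
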